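(* Let $P\in\mathbb{R}^{n\times n}$ be a sub-stochastic matrix, $\gamma\in[0,1)$, $c\in\mathbb{R}^n$ arbitrary, and $v\in\mathbb{R}^n$ the unique solution of $v=c+\gamma Pv$. Let $\pi\in\mathbb{R}^n$ be a sub-stochastic vector and $z\in\mathbb{R}$ a scalar such that $v_k>z+\gamma\pi^Tv$ for some $k\in\{1,\dots,n\}$. Let $\widehat P$ be the matrix obtained from $P$ by replacing its $k$-th row with $\pi^T$, $\widehat c$ the vector obtained from $c$ by replacing its $k$-th entry with $z$, and $\widehat v$ the unique solution of $\widehat v=\widehat c+\gamma\widehat P\widehat v$. Then $$\widehat v_k<c_k+\gamma\sum_{j=1}^nP_{kj}\widehat v_j .$$
   Context: A sub-stochastic matrix is a matrix with nonnegative entries and all row sums at most $1$. A sub-stochastic vector is a nonnegative vector whose entries sum to at most $1$. *)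

theory Defs
  imports "HOL-Analysis.Analysis"
begin

definition substochastic_matrix :: "real^'n^'n \<Rightarrow> bool" where
  "substochastic_matrix P \<longleftrightarrow>
     (\<forall>i j. 0 \<le> P $ i $ j) \<and> (\<forall>i. (\<Sum>j\<in>UNIV. P $ i $ j) \<le> 1)"

definition substochastic_vector :: "real^'n \<Rightarrow> bool" where
  "substochastic_vector x \<longleftrightarrow> (\<forall>i. 0 \<le> x $ i) \<and> (\<Sum>i\<in>UNIV. x $ i) \<le> 1"

end

theory Submission
  imports Defs
begin

text \<open>Let \<open>d = vh - v\<close> and \<open>Q\<close> be \<open>P\<close> with its \<open>k\<close>-th row replaced by \<open>\<pi>\<close>.
  Subtracting the two fixed-point equations gives \<open>d \<le> \<gamma> Q d\<close> componentwise, with strict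
  inequality in row \<open>k\<close>; the maximum principle for the discounted substochastic operator
  \<open>\<gamma> Q\<close> yields \<open>d \<le> 0\<close>. If the claim failed, we would also have \<open>d \<ge> \<gamma> P d\<close>, and the
  minimum principle for \<open>\<gamma> P\<close> would give \<open>d \<ge> 0\<close>. Then \<open>d = 0\<close>, contradicting the strict
  inequality in row \<open>k\<close>.\<close>

lemma substochastic_matrix_row:
  "substochastic_matrix P \<Longrightarrow> substochastic_vector (P $ i)"
  unfolding substochastic_matrix_def substochastic_vector_def by simp

lemma substochastic_inner_le:
  fixes w x :: "real^'n"
  assumes "substochastic_vector w" and "\<And>j. x $ j \<le> M" and "0 \<le> M"
  shows "w \<bullet> x \<le> M"
proof -
  have "w \<bullet> x \<le> (\<Sum>j\<in>UNIV. w $ j * M)"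
    unfolding inner_vec_def
    using assms(1,2) by (intro sum_mono) (simp add: substochastic_vector_def mult_left_mono)
  also have "\<dots> = (\<Sum>j\<in>UNIV. w $ j) * M"
    by (simp add: sum_distrib_right)
  also have "\<dots> \<le> M"
    using assms(1,3) mult_right_mono[of _ 1 M] by (simp add: substochastic_vector_def)
  finally show ?thesis .
qed

lemma discounted_subsolution_nonpos:
  fixes Q :: "real^'n^'n" and d :: "real^'n"
  assumes "substochastic_matrix Q" and "0 \<le> \<gamma>" and "\<gamma> < 1"
    and sub: "\<And>i. d $ i \<le> \<gamma> * (Q $ i \<bullet> d)"
  shows "d $ i \<le> 0"
proof -
  define M where "M = Max (range (($) d))"
  have le_M: "d $ j \<le> M" for j
    unfolding M_def by simp
  have "M \<in> range (($) d)"
    unfolding M_def by (rule Max_in) auto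
  then obtain i1 where i1: "d $ i1 = M"
    by auto
  have "M \<le> 0"
  proof (rule ccontr)
    assume "\<not> M \<le> 0"
    then have "0 < M" by simp
    have "M \<le> \<gamma> * (Q $ i1 \<bullet> d)"
      using sub[of i1] i1 by simp
    also have "\<dots> \<le> \<gamma> * M"
      using substochastic_inner_le[OF substochastic_matrix_row[OF assms(1)] le_M] \<open>0 < M\<close> assms(2)
      by (simp add: mult_left_mono)
    also have "\<dots> < M"
      using \<open>0 < M\<close> assms(3) by simp
    finally show False by simp
  qed
  then show ?thesis
    using le_M[of i] by simp
qed

lemma discounted_supersolution_nonneg:
  fixes P :: "real^'n^'n" and d :: "real^'n"
  assumes "substochastic_matrix P" and "0 \<le> \<gamma>" and "\<gamma> < 1"
    and super: "\<And>i. \<gamma> * (P $ i \<bullet> d) \<le> d $ i"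
  shows "0 \<le> d $ i"
  using discounted_subsolution_nonpos[OF assms(1-3), of "- d" i] super by simp

lemma substochastic_matrix_replace_row:
  assumes "substochastic_matrix P" and "substochastic_vector \<pi>"
  shows "substochastic_matrix (\<chi> i. if i = k then \<pi> else P $ i)"
  using assms unfolding substochastic_matrix_def substochastic_vector_def by simp

theorem lemma6:
  fixes P :: "real^'n^'n" and \<gamma> :: real and c v \<pi> vh :: "real^'n"
    and z :: real and k :: 'n
  assumes "substochastic_matrix P"
    and "0 \<le> \<gamma>" and "\<gamma> < 1"
    and "v = c + \<gamma> *\<^sub>R (P *v v)"
    and "substochastic_vector \<pi>"
    and "v $ k > z + \<gamma> * (\<pi> \<bullet> v)"
    and "vh = (\<chi> i. if i = k then z else c $ i)
              + \<gamma> *\<^sub>R ((\<chi> i. if i = k then \<pi> else P $ i) *v vh)"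
  shows "vh $ k < c $ k + \<gamma> * (\<Sum>j\<in>UNIV. P $ k $ j * vh $ j)"
proof (rule ccontr)
  assume claim_fails: "\<not> ?thesis"
  define Q where "Q = (\<chi> i. if i = k then \<pi> else P $ i)"
  define d where "d = vh - v"
  have v_eq: "v $ i = c $ i + \<gamma> * (P $ i \<bullet> v)" for i
    using arg_cong[OF assms(4), of "\<lambda>x. x $ i"] by (simp add: matrix_vector_mul_component)
  have vh_eq: "vh $ i = (if i = k then z else c $ i) + \<gamma> * (Q $ i \<bullet> vh)" for i
    using arg_cong[OF assms(7), of "\<lambda>x. x $ i"] by (simp add: Q_def matrix_vector_mul_component)
  have row_k: "d $ k < \<gamma> * (Q $ k \<bullet> d)"
    using vh_eq[of k] assms(6) by (simp add: d_def Q_def inner_diff_right algebra_simps)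
  have "d $ i \<le> \<gamma> * (Q $ i \<bullet> d)" for i
    using row_k v_eq[of i] vh_eq[of i]
    by (cases "i = k") (auto simp: d_def Q_def inner_diff_right algebra_simps)
  then have nonpos: "d $ i \<le> 0" for i
    using discounted_subsolution_nonpos substochastic_matrix_replace_row assms(1-3,5)
    unfolding Q_def by blast
  have "c $ k + \<gamma> * (P $ k \<bullet> vh) \<le> vh $ k"
    using claim_fails by (simp add: inner_vec_def)
  then have "\<gamma> * (P $ i \<bullet> d) \<le> d $ i" for i
    using v_eq[of i] vh_eq[of i]
    by (cases "i = k") (auto simp: d_def Q_def inner_diff_right right_diff_distrib)
  then have "0 \<le> d $ i" for i
    using discounted_supersolution_nonneg assms(1-3) by blast
  with nonpos have "d = 0"
    by (simp add: vec_eq_iff order_antisym)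
  then show False
    using row_k by simp
qed

end
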